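(* Let $v,d\in\mathbb{C}$ with $d\neq0$, $v\neq0$, and let $V(v,d)\subset\mathbb{C}P^2$ be the quartic curve $Xu_0^2-2v(u_2^2+u_1^2)u_2u_0+Xu_2^2=0$, where $X=du_2^2+2vu_1u_2+du_1^2$. If $d\neq\pm2v$, the only singular points of $V(v,d)$ are $[1,0,0]$ and $[0,1,0]$ and $V(v,d)$ is an irreducible quartic curve; moreover, if $d^2\neq v^2$ both singular points are nodes, and if $d^2=v^2$ both are ordinary cusps. If $d=2v$, then $V(v,d)$ is irreducible and has exactly one singular point $[1,-1,1]$ in addition to $[1,0,0],[0,1,0]$, and this point is a node. If $d=-2v$, then $V(v,d)$ is irreducible and has exactly one singular point $[-1,1,1]$ in addition to $[1,0,0],[0,1,0]$, and this point is a node.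
   Context: Coordinates $[u_0,u_1,u_2]$ on $\mathbb{C}P^2$. A singular point of the curve is a point where all partial derivatives of the defining polynomial vanish. *)

theory Defs
  imports "HOL-Analysis.Analysis" "HOL-Computational_Algebra.Polynomial"
begin

text \<open>Homogeneous polynomials in C[u0,u1,u2] are represented as nested univariate
  polynomials: the type complex poly poly poly is ((C[u0])[u1])[u2].
  Points of C^3 (homogeneous coordinates) are vectors complex^3 with components
  x$0, x$1, x$2 standing for u0, u1, u2.\<close>

type_synonym cpoly3 = "complex poly poly poly"

definition cst3 :: "complex \<Rightarrow> cpoly3" where
  "cst3 c = [:[:[:c:]:]:]"

definition U0 :: cpoly3 where "U0 = [:[:[:0, 1:]:]:]"
definition U1 :: cpoly3 where "U1 = [:[:0, 1:]:]"
definition U2 :: cpoly3 where "U2 = [:0, 1:]"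

definition ev3 :: "cpoly3 \<Rightarrow> complex^3 \<Rightarrow> complex" where
  "ev3 F x = poly (poly (poly F [:[:x$2:]:]) [:x$1:]) (x$0)"

definition pd3 :: "3 \<Rightarrow> cpoly3 \<Rightarrow> cpoly3" where
  "pd3 i F = (if i = 0 then map_poly (map_poly pderiv) F
              else if i = 1 then map_poly pderiv F
              else pderiv F)"

definition pt3 :: "complex \<Rightarrow> complex \<Rightarrow> complex \<Rightarrow> complex^3" where
  "pt3 a b c = (\<chi> i. if i = 0 then a else if i = 1 then b else c)"

definition proj_eq :: "complex^3 \<Rightarrow> complex^3 \<Rightarrow> bool" where
  "proj_eq x y \<longleftrightarrow> (\<exists>c. c \<noteq> 0 \<and> x = c *s y)"

definition singular_pt :: "cpoly3 \<Rightarrow> complex^3 \<Rightarrow> bool" where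
  "singular_pt F p \<longleftrightarrow> p \<noteq> 0 \<and> ev3 F p = 0 \<and> (\<forall>i. ev3 (pd3 i F) p = 0)"

text \<open>Quadratic and cubic Taylor terms of F at p: F(p + x) = F(p) + ... + tq F p x + tc F p x + ...\<close>
definition tq :: "cpoly3 \<Rightarrow> complex^3 \<Rightarrow> complex^3 \<Rightarrow> complex" where
  "tq F p x = (1/2) * (\<Sum>i\<in>UNIV. \<Sum>j\<in>UNIV. ev3 (pd3 i (pd3 j F)) p * x$i * x$j)"

definition tc :: "cpoly3 \<Rightarrow> complex^3 \<Rightarrow> complex^3 \<Rightarrow> complex" where
  "tc F p x = (1/6) * (\<Sum>i\<in>UNIV. \<Sum>j\<in>UNIV. \<Sum>k\<in>UNIV.
                 ev3 (pd3 i (pd3 j (pd3 k F))) p * x$i * x$j * x$k)"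

definition linf :: "complex^3 \<Rightarrow> complex^3 \<Rightarrow> complex" where
  "linf l x = (\<Sum>i\<in>UNIV. l$i * x$i)"

text \<open>Node: a singular point whose tangent cone (quadratic Taylor term) is a product
  of two linearly independent linear forms (two distinct tangent lines).\<close>
definition is_node :: "cpoly3 \<Rightarrow> complex^3 \<Rightarrow> bool" where
  "is_node F p \<longleftrightarrow> singular_pt F p \<and>
     (\<exists>l1 l2. (\<forall>a b. a *s l1 + b *s l2 = 0 \<longrightarrow> a = 0 \<and> b = 0) \<and>
              (\<forall>x. tq F p x = linf l1 x * linf l2 x))"

text \<open>Ordinary cusp: a singular point whose tangent cone is a double line l^2 (l nonzero)
  and such that the tangent line meets the curve at p with multiplicity exactly 3,
  i.e. the cubic Taylor term does not vanish identically on the tangent line.\<close>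
definition is_ordinary_cusp :: "cpoly3 \<Rightarrow> complex^3 \<Rightarrow> bool" where
  "is_ordinary_cusp F p \<longleftrightarrow> singular_pt F p \<and>
     (\<exists>l. l \<noteq> 0 \<and> (\<forall>x. tq F p x = (linf l x)^2) \<and>
          (\<exists>w. linf l w = 0 \<and> tc F p w \<noteq> 0))"

definition Xpoly :: "complex \<Rightarrow> complex \<Rightarrow> cpoly3" where
  "Xpoly a b = cst3 b * U2^2 + cst3 (2*a) * U1 * U2 + cst3 b * U1^2"

definition Vpoly :: "complex \<Rightarrow> complex \<Rightarrow> cpoly3" where
  "Vpoly a b = Xpoly a b * U0^2 - cst3 (2*a) * (U2^2 + U1^2) * U2 * U0 + Xpoly a b * U2^2"

end

theory Submission
  imports Defs
begin

(* Writing a point as (a, b, c) = (u0, u1, u2), the singular points are found by solving the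
  gradient equations: for c = 0 they force [1,0,0] or [0,1,0]; for c \<noteq> 0, eliminating X
  between V and its u0-derivative forces a = \<plusminus>c, and the u1-derivative then forces
  d = \<plusminus>2v and b = -a.
  The quadratic Taylor term at each singular point is a binary quadratic form in two
  independent linear forms. It splits into two distinct tangent lines iff its discriminant is
  nonzero, which at the coordinate points means d\<^sup>2 \<noteq> v\<^sup>2; otherwise it is the square of a
  line on which the cubic term does not vanish, i.e. the point is an ordinary cusp.
  For irreducibility: V has degree 4 in u2 with constant leading coefficient d, so both factors
  of a factorization have constant leading coefficients, and setting u0 = 1 preserves their
  u2-degrees. The resulting quartic over C[u1] has no root in C[u1] (compare degrees, then
  coefficients) and is not a product of two quadratics (compare coefficients). *)

section \<open>Evaluation and partial derivatives\<close>

lemma map_poly_additive: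
  fixes f :: "'a::comm_ring \<Rightarrow> 'b::comm_ring"
  assumes "\<And>a b. f (a + b) = f a + f b"
  shows "map_poly f (p + q) = map_poly f p + map_poly f q"
proof -
  have "f 0 = 0" using assms[of 0 0] by simp
  then show ?thesis by (intro poly_eqI) (simp add: coeff_map_poly assms)
qed

lemma map_poly_multiplicative:
  fixes f :: "'a::comm_ring \<Rightarrow> 'b::comm_ring"
  assumes add: "\<And>a b. f (a + b) = f a + f b" and mult: "\<And>a b. f (a * b) = f a * f b"
  shows "map_poly f (p * q) = map_poly f p * map_poly f q"
proof (induction p)
  case (pCons a p)
  have "f 0 = 0" using add[of 0 0] by simp
  then show ?case
    by (simp add: map_poly_additive[OF add] map_poly_smult[OF _ mult] map_poly_pCons pCons.IH)
qed simp

lemma map_poly_derivation: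
  fixes D :: "'a::comm_ring \<Rightarrow> 'a"
  assumes add: "\<And>a b. D (a + b) = D a + D b" and leibniz: "\<And>a b. D (a * b) = D a * b + a * D b"
  shows "map_poly D (p * q) = map_poly D p * q + p * map_poly D q"
proof (induction p)
  case (pCons a p)
  have D0: "D 0 = 0" using add[of 0 0] by simp
  have "map_poly D (smult a q) = smult (D a) q + smult a (map_poly D q)"
    by (intro poly_eqI) (simp add: coeff_map_poly D0 add leibniz)
  then show ?case
    by (simp add: map_poly_additive[OF add] map_poly_pCons D0 pCons.IH algebra_simps)
qed simp

lemma map_pderiv_add: "map_poly pderiv ((p::'a::idom poly poly) + q) = map_poly pderiv p + map_poly pderiv q"
  by (rule map_poly_additive) (simp add: pderiv_add)

lemma map_pderiv_mult:
  "map_poly pderiv ((p::'a::idom poly poly) * q) = map_poly pderiv p * q + p * map_poly pderiv q"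
  by (rule map_poly_derivation) (simp_all add: pderiv_add pderiv_mult algebra_simps)

lemma pd3_add: "pd3 i (F + G) = pd3 i F + pd3 i G"
  unfolding pd3_def by (simp add: pderiv_add map_poly_additive map_pderiv_add)

lemma pd3_diff: "pd3 i (F - G) = pd3 i F - pd3 i G"
  by (metis add_diff_cancel pd3_add diff_add_cancel)

lemma pd3_mult: "pd3 i (F * G) = pd3 i F * G + F * pd3 i G"
  unfolding pd3_def
  by (simp add: pderiv_mult map_pderiv_mult algebra_simps
      map_poly_derivation[of "map_poly pderiv", OF map_pderiv_add map_pderiv_mult])

lemma cst3_numeral: "(numeral n :: cpoly3) = cst3 (numeral n)"
proof (induction n rule: num_induct)
  case One
  show ?case by (simp add: cst3_def one_pCons)
next
  case (inc n)
  have "cst3 (a + b) = cst3 a + cst3 b" for a b by (simp add: cst3_def)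
  moreover have "cst3 1 = 1" by (simp add: cst3_def one_pCons)
  ultimately show ?case using inc by (metis numeral_inc)
qed

lemma pd3_cst3: "pd3 i (cst3 c) = 0"
  unfolding pd3_def cst3_def by (simp add: map_poly_pCons)

lemma pd3_numeral: "pd3 i (numeral n) = 0"
  by (simp only: cst3_numeral pd3_cst3)

lemma pd3_U0: "pd3 i U0 = (if i = 0 then 1 else 0)"
  and pd3_U1: "pd3 i U1 = (if i = 1 then 1 else 0)"
  and pd3_U2: "pd3 i U2 = (if i = 0 \<or> i = 1 then 0 else 1)"
  unfolding pd3_def U0_def U1_def U2_def by (simp_all add: map_poly_pCons pderiv_pCons one_pCons)

lemmas pd3_simps = pd3_add pd3_diff pd3_mult pd3_cst3 pd3_numeral pd3_U0 pd3_U1 pd3_U2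

lemma ev3_simps:
  "ev3 (F + G) x = ev3 F x + ev3 G x" "ev3 (F - G) x = ev3 F x - ev3 G x"
  "ev3 (F * G) x = ev3 F x * ev3 G x" "ev3 0 x = 0" "ev3 1 x = 1"
  "ev3 (cst3 c) x = c" "ev3 (numeral n) x = numeral n"
  "ev3 U0 x = x$0" "ev3 U1 x = x$1" "ev3 U2 x = x$2"
  by (simp_all add: ev3_def cst3_def cst3_numeral U0_def U1_def U2_def)

lemma forall_3': "(\<forall>i::3. P i) \<longleftrightarrow> P 0 \<and> P 1 \<and> P 2"
proof -
  have "(3::3) = 0" by simp
  then show ?thesis unfolding forall_3 by metis
qed

lemma sum_3': "sum f (UNIV::3 set) = f 0 + f 1 + f 2"
proof -
  have "(3::3) = 0" by simp
  then show ?thesis unfolding sum_3 by (metis add.commute add.left_commute)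
qed

lemma vec3_eq_0_iff: "(p::complex^3) = 0 \<longleftrightarrow> p$0 = 0 \<and> p$1 = 0 \<and> p$2 = 0"
  unfolding vec_eq_iff forall_3' by simp

lemma pt3_nth [simp]: "pt3 a b c $ 0 = a" "pt3 a b c $ 1 = b" "pt3 a b c $ 2 = c"
  by (simp_all add: pt3_def)

lemma ev3_Vpoly:
  "ev3 (Vpoly v d) x =
     (d * x$2^2 + 2 * v * x$1 * x$2 + d * x$1^2) * (x$0^2 + x$2^2) - 2 * v * x$0 * x$2 * (x$1^2 + x$2^2)"
  unfolding Vpoly_def Xpoly_def power2_eq_square
  by (simp add: ev3_simps) (simp add: algebra_simps)

lemma ev3_pd3_Vpoly:
  "ev3 (pd3 0 (Vpoly v d)) x =
     2 * x$0 * (d * x$2^2 + 2 * v * x$1 * x$2 + d * x$1^2) - 2 * v * x$2 * (x$1^2 + x$2^2)"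
  "ev3 (pd3 1 (Vpoly v d)) x =
     (2 * d * x$1 + 2 * v * x$2) * (x$0^2 + x$2^2) - 4 * v * x$0 * x$1 * x$2"
  "ev3 (pd3 2 (Vpoly v d)) x =
     (2 * v * x$1 + 2 * d * x$2) * (x$0^2 + x$2^2) + 2 * x$2 * (d * x$2^2 + 2 * v * x$1 * x$2 + d * x$1^2)
       - 2 * v * x$0 * (x$1^2 + 3 * x$2^2)"
  unfolding Vpoly_def Xpoly_def power2_eq_square
  by (simp_all add: ev3_simps pd3_simps) (simp_all add: algebra_simps)

section \<open>Singular points\<close>

lemma proj_eq_refl: "proj_eq p p"
  unfolding proj_eq_def by (intro exI[of _ 1]) simp

lemma proj_eq_pt3_iff:
  "proj_eq p (pt3 a b c) \<longleftrightarrow> (\<exists>k. k \<noteq> 0 \<and> p$0 = k * a \<and> p$1 = k * b \<and> p$2 = k * c)"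
  unfolding proj_eq_def vec_eq_iff forall_3' by simp

text \<open>E0 and E1 are the u0- and u1-derivative equations at a point with u0 = u2 = c, divided by c.\<close>

lemma singular_equations_u0_eq_u2:
  fixes b c v d :: complex
  assumes "c \<noteq> 0" "d \<noteq> 0" "v \<noteq> 0"
    and E0: "(d - v) * (b^2 + c^2) + 2 * v * b * c = 0"
    and E1: "(d - v) * b + v * c = 0"
  shows "d = 2 * v \<and> b = -c"
proof
  have "d * (d - 2 * v) * c^2 = 0" using E0 E1 by algebra
  then show "d = 2 * v" using assms(1,2) by simp
  then have "v * (b + c) = 0" using E1 by algebra
  then show "b = -c" using assms(3) by (simp add: eq_neg_iff_add_eq_0)
qed

lemma singular_pt_Vpoly_cases:
  fixes v d :: complex
  assumes d: "d \<noteq> 0" and v: "v \<noteq> 0" and sing: "singular_pt (Vpoly v d) p"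
  shows "(p$1 = 0 \<and> p$2 = 0) \<or> (p$0 = 0 \<and> p$2 = 0) \<or>
    (d = 2 * v \<and> p$0 = p$2 \<and> p$1 = - p$2) \<or> (d = -2 * v \<and> p$0 = - p$2 \<and> p$1 = p$2)"
proof -
  define a b c where "a = p$0" and "b = p$1" and "c = p$2"
  have E: "(d * c^2 + 2 * v * b * c + d * b^2) * (a^2 + c^2) - 2 * v * a * c * (b^2 + c^2) = 0"
    and E0: "2 * a * (d * c^2 + 2 * v * b * c + d * b^2) - 2 * v * c * (b^2 + c^2) = 0"
    and E1: "(2 * d * b + 2 * v * c) * (a^2 + c^2) - 4 * v * a * b * c = 0"
    and E2: "(2 * v * b + 2 * d * c) * (a^2 + c^2) + 2 * c * (d * c^2 + 2 * v * b * c + d * b^2)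
               - 2 * v * a * (b^2 + 3 * c^2) = 0"
    using sing unfolding singular_pt_def forall_3' ev3_Vpoly ev3_pd3_Vpoly a_def b_def c_def by auto
  show ?thesis
  proof (cases "c = 0")
    case True
    then have "d * b * a^2 = 0" using E1 by (simp add: power2_eq_square)
    then show ?thesis using True d unfolding a_def b_def c_def by auto
  next
    case c: False
    have "b^2 + c^2 \<noteq> 0"
    proof
      assume T: "b^2 + c^2 = 0"
      then have "b \<noteq> 0" using c by auto
      moreover have "4 * v * a * b * c = 0" using E0 T by algebra
      ultimately have a: "a = 0" using c v by simp
      have "d * b + v * c = 0" using E1 a c by algebra
      moreover have "3 * v * b + d * c = 0" using E2 T a c by algebra
      ultimately show False using T c v d by algebra
    qed
    \<comment> \<open>This is \<open>2 a E - (a\<^sup>2 + c\<^sup>2) E0\<close>, which eliminates X.\<close>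
    moreover have "2 * v * c * (b^2 + c^2) * (c^2 - a^2) = 0" using E E0 by algebra
    ultimately have "a = c \<or> a = -c" using c v by (auto simp: power2_eq_iff)
    then show ?thesis
    proof
      assume ac: "a = c"
      have "(d - v) * (b^2 + c^2) + 2 * v * b * c = 0" using E0 c unfolding ac by algebra
      moreover have "(d - v) * b + v * c = 0" using E1 c unfolding ac by algebra
      ultimately show ?thesis using singular_equations_u0_eq_u2[OF c d v] ac unfolding a_def b_def c_def by auto
    next
      assume ac: "a = -c"
      \<comment> \<open>The substitution \<open>(a, b, v) \<mapsto> (-a, -b, -v)\<close> preserves the equations up to sign.\<close>
      have "(d - (-v)) * ((-b)^2 + c^2) + 2 * (-v) * (-b) * c = 0" using E0 c unfolding ac by algebra
      moreover have "(d - (-v)) * (-b) + (-v) * c = 0" using E1 c unfolding ac by algebra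
      ultimately have "d = 2 * (-v) \<and> -b = -c"
        using singular_equations_u0_eq_u2[OF c d, where v = "-v" and b = "-b"] v by simp
      then show ?thesis using ac unfolding a_def b_def c_def by simp
    qed
  qed
qed

lemma singular_pt_Vpoly_iff:
  fixes v d :: complex
  assumes d: "d \<noteq> 0" and v: "v \<noteq> 0"
  shows "singular_pt (Vpoly v d) p \<longleftrightarrow> proj_eq p (pt3 1 0 0) \<or> proj_eq p (pt3 0 1 0) \<or>
     (d = 2 * v \<and> proj_eq p (pt3 1 (-1) 1)) \<or> (d = -2 * v \<and> proj_eq p (pt3 (-1) 1 1))"
proof
  assume sing: "singular_pt (Vpoly v d) p"
  then have "p \<noteq> 0" by (simp add: singular_pt_def)
  with singular_pt_Vpoly_cases[OF d v sing] show
    "proj_eq p (pt3 1 0 0) \<or> proj_eq p (pt3 0 1 0) \<or>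
     (d = 2 * v \<and> proj_eq p (pt3 1 (-1) 1)) \<or> (d = -2 * v \<and> proj_eq p (pt3 (-1) 1 1))"
    unfolding proj_eq_pt3_iff vec3_eq_0_iff by force
next
  assume "proj_eq p (pt3 1 0 0) \<or> proj_eq p (pt3 0 1 0) \<or>
     (d = 2 * v \<and> proj_eq p (pt3 1 (-1) 1)) \<or> (d = -2 * v \<and> proj_eq p (pt3 (-1) 1 1))"
  then show "singular_pt (Vpoly v d) p"
    unfolding singular_pt_def forall_3' ev3_Vpoly ev3_pd3_Vpoly vec3_eq_0_iff proj_eq_pt3_iff
    by (elim disjE exE conjE) (simp_all add: algebra_simps power2_eq_square)
qed

section \<open>Nodes and cusps\<close>

definition pair_independent :: "complex^3 \<Rightarrow> complex^3 \<Rightarrow> bool" where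
  "pair_independent l m \<longleftrightarrow> (\<forall>a b. a *s l + b *s m = 0 \<longrightarrow> a = 0 \<and> b = 0)"

lemma pair_independentI:
  assumes minor: "l$i * m$j - l$j * m$i \<noteq> 0"
  shows "pair_independent l m"
  unfolding pair_independent_def
proof (intro allI impI)
  fix a b :: complex
  assume "a *s l + b *s m = 0"
  then have "a * l$i + b * m$i = 0" "a * l$j + b * m$j = 0"
    by (simp_all add: vec_eq_iff)
  then have "a * (l$i * m$j - l$j * m$i) = 0" "b * (l$i * m$j - l$j * m$i) = 0"
    by algebra+
  then show "a = 0 \<and> b = 0" using minor by simp
qed

lemma linf_lincomb: "linf (a *s l + b *s m) x = a * linf l x + b * linf m x"
  unfolding linf_def by (simp add: sum.distrib sum_distrib_left algebra_simps)

lemma linf_pt3: "linf (pt3 a b c) x = a * x$0 + b * x$1 + c * x$2"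
  unfolding linf_def sum_3' by simp

lemma is_nodeI_binary_form:
  assumes sing: "singular_pt F p" and indep: "pair_independent m n"
    and a: "a \<noteq> 0" and disc: "b^2 \<noteq> a * c"
    and tq: "\<And>x. tq F p x = a * (linf m x)^2 + 2 * b * linf m x * linf n x + c * (linf n x)^2"
  shows "is_node F p"
proof -
  define s where "s = csqrt (b^2 - a * c)"
  have s2: "(b + s) * (b - s) = a * c" using power2_csqrt[of "b^2 - a * c"]
    unfolding s_def power2_eq_square by algebra
  have s: "s \<noteq> 0" using s2 disc by (auto simp: power2_eq_square)
  define l1 where "l1 = a *s m + (b + s) *s n"
  define l2 where "l2 = 1 *s m + ((b - s) / a) *s n"
  have "pair_independent l1 l2"
    unfolding pair_independent_def
  proof (intro allI impI)
    fix \<alpha> \<beta> :: complex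
    assume "\<alpha> *s l1 + \<beta> *s l2 = 0"
    then have "(\<alpha> * a + \<beta>) *s m + (\<alpha> * (b + s) + \<beta> * ((b - s) / a)) *s n = 0"
      unfolding l1_def l2_def by (simp add: vec_eq_iff algebra_simps)
    then have "\<alpha> * a + \<beta> = 0" "\<alpha> * (b + s) + \<beta> * ((b - s) / a) = 0"
      using indep unfolding pair_independent_def by blast+
    then have "2 * \<alpha> * s = 0" using a by (simp add: field_simps) algebra
    then show "\<alpha> = 0 \<and> \<beta> = 0" using s \<open>\<alpha> * a + \<beta> = 0\<close> by simp
  qed
  moreover have "tq F p x = linf l1 x * linf l2 x" for x
    unfolding tq l1_def l2_def linf_lincomb using a s2
    by (simp add: field_simps power2_eq_square) algebra
  ultimately show ?thesis using sing unfolding is_node_def pair_independent_def by blast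
qed

lemma is_ordinary_cuspI_binary_form:
  assumes sing: "singular_pt F p" and indep: "pair_independent m n"
    and a: "a \<noteq> 0" and disc: "b^2 = a * c"
    and tq: "\<And>x. tq F p x = a * (linf m x)^2 + 2 * b * linf m x * linf n x + c * (linf n x)^2"
    and w: "linf m w = b" "linf n w = -a" and tc: "tc F p w \<noteq> 0"
  shows "is_ordinary_cusp F p"
proof -
  define r where "r = csqrt a"
  have r2: "r^2 = a" by (simp add: r_def)
  define l where "l = r *s m + (r * b / a) *s n"
  have "l \<noteq> 0"
  proof
    assume "l = 0"
    then have "r = 0" using indep unfolding pair_independent_def l_def by blast
    then show False using r2 a by simp
  qed
  moreover have "tq F p x = (linf l x)^2" for x
    unfolding tq l_def linf_lincomb using a r2 disc
    by (simp add: field_simps power2_eq_square) algebra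
  moreover have "linf l w = 0"
    unfolding l_def linf_lincomb w using a by simp
  ultimately show ?thesis using sing tc unfolding is_ordinary_cusp_def by blast
qed

lemma tq_Vpoly:
  "tq (Vpoly v d) (pt3 1 0 0) x = d * x$1^2 + 2 * v * x$1 * x$2 + d * x$2^2"
  "tq (Vpoly v d) (pt3 0 1 0) x = d * x$0^2 - 2 * v * x$0 * x$2 + d * x$2^2"
  "tq (Vpoly v (2 * v)) (pt3 1 (-1) 1) x = 2 * v * (x$0 - x$2)^2 + 2 * v * (x$1 + x$2)^2"
  "tq (Vpoly v (-2 * v)) (pt3 (-1) 1 1) x = -2 * v * (x$0 + x$2)^2 - 2 * v * (x$1 - x$2)^2"
  unfolding tq_def sum_3' Vpoly_def Xpoly_def power2_eq_square
  by (simp_all add: ev3_simps pd3_simps) (simp_all add: algebra_simps)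

lemma tc_Vpoly:
  "tc (Vpoly v d) (pt3 1 0 0) x =
     2 * x$0 * (d * x$1^2 + 2 * v * x$1 * x$2 + d * x$2^2) - 2 * v * x$2 * (x$1^2 + x$2^2)"
  "tc (Vpoly v d) (pt3 0 1 0) x =
     (2 * d * x$1 + 2 * v * x$2) * (x$0^2 + x$2^2) - 4 * v * x$0 * x$1 * x$2"
  unfolding tc_def sum_3' Vpoly_def Xpoly_def power2_eq_square
  by (simp_all add: ev3_simps pd3_simps) (simp_all add: algebra_simps)

lemma is_node_Vpoly_coordinate_points:
  fixes v d :: complex
  assumes d: "d \<noteq> 0" and v: "v \<noteq> 0" and dv: "d^2 \<noteq> v^2"
  shows "is_node (Vpoly v d) (pt3 1 0 0)" "is_node (Vpoly v d) (pt3 0 1 0)"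
proof -
  have disc: "b^2 \<noteq> d * d" if "b^2 = v^2" for b using dv that by (simp add: power2_eq_square)
  show "is_node (Vpoly v d) (pt3 1 0 0)"
  proof (rule is_nodeI_binary_form[where m = "pt3 0 1 0" and n = "pt3 0 0 1" and a = d and b = v and c = d])
    show "singular_pt (Vpoly v d) (pt3 1 0 0)" using singular_pt_Vpoly_iff[OF d v] proj_eq_refl by blast
    show "pair_independent (pt3 0 1 0) (pt3 0 0 1)" by (rule pair_independentI[of _ 1 _ 2]) simp
  qed (simp_all add: d disc tq_Vpoly linf_pt3)
  show "is_node (Vpoly v d) (pt3 0 1 0)"
  proof (rule is_nodeI_binary_form[where m = "pt3 1 0 0" and n = "pt3 0 0 1" and a = d and b = "-v" and c = d])
    show "singular_pt (Vpoly v d) (pt3 0 1 0)" using singular_pt_Vpoly_iff[OF d v] proj_eq_refl by blast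
    show "pair_independent (pt3 1 0 0) (pt3 0 0 1)" by (rule pair_independentI[of _ 0 _ 2]) simp
  qed (simp_all add: d disc tq_Vpoly linf_pt3)
qed

lemma is_ordinary_cusp_Vpoly_coordinate_points:
  fixes v d :: complex
  assumes d: "d \<noteq> 0" and v: "v \<noteq> 0" and dv: "d^2 = v^2"
  shows "is_ordinary_cusp (Vpoly v d) (pt3 1 0 0)" "is_ordinary_cusp (Vpoly v d) (pt3 0 1 0)"
proof -
  have tc_value: "4 * v * d^3 \<noteq> 0" using d v by simp
  have disc: "v * v = d * d" using dv by (simp add: power2_eq_square)
  show "is_ordinary_cusp (Vpoly v d) (pt3 1 0 0)"
  proof (rule is_ordinary_cuspI_binary_form[where m = "pt3 0 1 0" and n = "pt3 0 0 1"
        and a = d and b = v and c = d and w = "pt3 0 v (-d)"])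
    show "singular_pt (Vpoly v d) (pt3 1 0 0)" using singular_pt_Vpoly_iff[OF d v] proj_eq_refl by blast
    show "pair_independent (pt3 0 1 0) (pt3 0 0 1)" by (rule pair_independentI[of _ 1 _ 2]) simp
    have "tc (Vpoly v d) (pt3 1 0 0) (pt3 0 v (-d)) = 4 * v * d^3"
      unfolding tc_Vpoly using dv by simp algebra
    then show "tc (Vpoly v d) (pt3 1 0 0) (pt3 0 v (-d)) \<noteq> 0" using tc_value by simp
  qed (simp_all add: d disc tq_Vpoly linf_pt3 power2_eq_square)
  show "is_ordinary_cusp (Vpoly v d) (pt3 0 1 0)"
  proof (rule is_ordinary_cuspI_binary_form[where m = "pt3 1 0 0" and n = "pt3 0 0 1"
        and a = d and b = "-v" and c = d and w = "pt3 (-v) 0 (-d)"])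
    show "singular_pt (Vpoly v d) (pt3 0 1 0)" using singular_pt_Vpoly_iff[OF d v] proj_eq_refl by blast
    show "pair_independent (pt3 1 0 0) (pt3 0 0 1)" by (rule pair_independentI[of _ 0 _ 2]) simp
    have "tc (Vpoly v d) (pt3 0 1 0) (pt3 (-v) 0 (-d)) = - 4 * v * d^3"
      unfolding tc_Vpoly using dv by simp algebra
    then show "tc (Vpoly v d) (pt3 0 1 0) (pt3 (-v) 0 (-d)) \<noteq> 0" using tc_value by simp
  qed (simp_all add: d disc tq_Vpoly linf_pt3 power2_eq_square)
qed

lemma is_node_Vpoly_extra_points:
  fixes v :: complex
  assumes v: "v \<noteq> 0"
  shows "is_node (Vpoly v (2 * v)) (pt3 1 (-1) 1)" "is_node (Vpoly v (-2 * v)) (pt3 (-1) 1 1)"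
proof -
  show "is_node (Vpoly v (2 * v)) (pt3 1 (-1) 1)"
  proof (rule is_nodeI_binary_form[where m = "pt3 1 0 (-1)" and n = "pt3 0 1 1"
        and a = "2 * v" and b = 0 and c = "2 * v"])
    show "singular_pt (Vpoly v (2 * v)) (pt3 1 (-1) 1)"
      using singular_pt_Vpoly_iff[of "2 * v" v] v proj_eq_refl by auto
    show "pair_independent (pt3 1 0 (-1)) (pt3 0 1 1)" by (rule pair_independentI[of _ 0 _ 1]) simp
  qed (simp_all add: v tq_Vpoly linf_pt3)
  show "is_node (Vpoly v (-2 * v)) (pt3 (-1) 1 1)"
  proof (rule is_nodeI_binary_form[where m = "pt3 1 0 1" and n = "pt3 0 1 (-1)"
        and a = "-2 * v" and b = 0 and c = "-2 * v"])
    show "singular_pt (Vpoly v (-2 * v)) (pt3 (-1) 1 1)"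
      using singular_pt_Vpoly_iff[of "-2 * v" v] v proj_eq_refl by auto
    show "pair_independent (pt3 1 0 1) (pt3 0 1 (-1))" by (rule pair_independentI[of _ 0 _ 1]) simp
    show "tq (Vpoly v (-2 * v)) (pt3 (-1) 1 1) x =
        (-2 * v) * (linf (pt3 1 0 1) x)^2 + 2 * 0 * linf (pt3 1 0 1) x * linf (pt3 0 1 (-1)) x
        + (-2 * v) * (linf (pt3 0 1 (-1)) x)^2" for x
      unfolding tq_Vpoly linf_pt3 by simp
  qed (simp_all add: v)
qed

section \<open>Irreducibility\<close>

lemma Vpoly_coeffs:
  "Vpoly v d = [: [:0, 0, [:0, 0, d:]:], [:0, [:0, 0, 2 * v:], [:0, -2 * v:]:],
                  [:[:0, 0, d:], 0, [:d:]:], [:[:0, -2 * v:], [:2 * v:]:], [:[:d:]:] :]"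
  unfolding Vpoly_def Xpoly_def cst3_def U0_def U1_def U2_def
  by (simp add: power2_eq_square algebra_simps)

text \<open>Setting u0 = 1 turns V into the quartic \<open>Vaffine\<close> in u2 with coefficients in C[u1].\<close>

definition dehomogenize :: "cpoly3 \<Rightarrow> complex poly poly" where
  "dehomogenize = map_poly (map_poly (\<lambda>p. poly p 1))"

definition Vaffine :: "complex \<Rightarrow> complex \<Rightarrow> complex poly poly" where
  "Vaffine v d = [: [:0, 0, d:], [:0, 2 * v, -2 * v:], [:d, 0, d:], [:-2 * v, 2 * v:], [:d:] :]"

lemma dehomogenize_mult: "dehomogenize (F * G) = dehomogenize F * dehomogenize G"
proof -
  have add: "map_poly (\<lambda>p. poly p 1) (a + b) = map_poly (\<lambda>p. poly p 1) a + map_poly (\<lambda>p. poly p 1) b"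
    for a b :: "complex poly poly"
    by (rule map_poly_additive) simp
  have mult: "map_poly (\<lambda>p. poly p 1) (a * b) = map_poly (\<lambda>p. poly p 1) a * map_poly (\<lambda>p. poly p 1) b"
    for a b :: "complex poly poly"
    by (rule map_poly_multiplicative) simp_all
  show ?thesis unfolding dehomogenize_def by (rule map_poly_multiplicative[OF add mult])
qed

lemma dehomogenize_Vpoly: "dehomogenize (Vpoly v d) = Vaffine v d"
  unfolding Vpoly_coeffs dehomogenize_def Vaffine_def by (simp add: map_poly_pCons)

lemma dehomogenize_degree_lead_coeff:
  assumes "lead_coeff G = [:[:a:]:]" "a \<noteq> 0"
  shows "degree (dehomogenize G) = degree G" "lead_coeff (dehomogenize G) = [:a:]"
proof -
  have "map_poly (\<lambda>p. poly p 1) (lead_coeff G) = [:a:]" using assms by (simp add: map_poly_pCons)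
  then show "degree (dehomogenize G) = degree G" "lead_coeff (dehomogenize G) = [:a:]"
    unfolding dehomogenize_def using assms lead_coeff_map_poly_nz[of "map_poly (\<lambda>p. poly p 1)" G]
    by (auto intro: map_poly_degree_eq)
qed

lemma poly_mult_eq_const_imp_const:
  fixes p q :: "'a::idom poly"
  assumes "p * q = [:c:]" "c \<noteq> 0"
  shows "p = [:coeff p 0:]"
proof -
  have "p \<noteq> 0" "q \<noteq> 0" using assms by auto
  then have "degree p = 0" using degree_mult_eq[of p q] assms by simp
  then show ?thesis by (simp add: degree_0_id)
qed

lemma poly_poly_mult_eq_const_imp_const:
  fixes x y :: "'a::idom poly poly"
  assumes xy: "x * y = [:[:c:]:]" and c: "c \<noteq> 0"
  shows "\<exists>a. a \<noteq> 0 \<and> x = [:[:a:]:]"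
proof -
  have "[:c:] \<noteq> 0" using c by simp
  then obtain x0 y0 where x: "x = [:x0:]" and y: "y = [:y0:]"
    using poly_mult_eq_const_imp_const[OF xy] poly_mult_eq_const_imp_const[of y x] xy
    by (metis mult.commute)
  have x0: "x0 * y0 = [:c:]" using xy unfolding x y by (simp add: ac_simps)
  obtain a where "x0 = [:a:]" using poly_mult_eq_const_imp_const[OF x0 c] by blast
  moreover have "x0 \<noteq> 0" using x0 c by auto
  ultimately show ?thesis using x by auto
qed

lemma degree_le_1_eq: "degree (p::'a::zero poly) \<le> 1 \<Longrightarrow> p = [:coeff p 0, coeff p 1:]"
  by (rule poly_eqI) (auto simp: coeff_pCons coeff_eq_0 split: nat.splits)

lemma degree_le_2_eq: "degree (p::'a::zero poly) \<le> 2 \<Longrightarrow> p = [:coeff p 0, coeff p 1, coeff p 2:]"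
  by (rule poly_eqI) (auto simp: coeff_pCons coeff_eq_0 numeral_2_eq_2 split: nat.splits)

lemma degree_pCons3_le: "degree [:x, y, z:] \<le> 2"
  by (rule degree_le) (auto simp: coeff_pCons split: nat.splits)

lemma degree_pCons2_le: "degree [:x, y:] \<le> 1"
  by (rule degree_le) (auto simp: coeff_pCons split: nat.splits)

lemma Vaffine_no_linear_root:
  fixes a b v d :: complex
  assumes d: "d \<noteq> 0" and v: "v \<noteq> 0"
  shows "poly (Vaffine v d) [:b, a:] \<noteq> 0"
proof
  assume "poly (Vaffine v d) [:b, a:] = 0"
  then have c0: "d * b^2 + d * b^4 - 2 * v * b^3 = 0"
    and c1: "2 * v * b + 2 * d * a * b + 2 * v * b^3 + 4 * d * a * b^3 - 6 * v * a * b^2 = 0"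
    and c2: "d + d * a^2 + d * b^2 + 2 * v * a + 6 * v * a * b^2 + 6 * d * a^2 * b^2
               - 2 * v * b - 6 * v * a^2 * b = 0"
    and c3: "2 * d * a * b + 6 * v * a^2 * b + 4 * d * a^3 * b - 2 * v * a - 2 * v * a^3 = 0"
    and c4: "d * a^2 + d * a^4 + 2 * v * a^3 = 0"
    unfolding Vaffine_def
    by (simp_all add: algebra_simps power2_eq_square power3_eq_cube power4_eq_xxxx)
  show False
  proof (cases "a = 0")
    case True
    have "2 * v * (b + b^3) = 0" using c1 True by algebra
    then have "b + b^3 = 0" using v by simp
    moreover have "d + d * b^2 - 2 * v * b = 0" using c2 True by simp
    ultimately show False using d v by algebra
  next
    case a: False
    have "a^2 * (d * a^2 + 2 * v * a + d) = 0" using c4 by algebra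
    then have A: "d * a^2 + 2 * v * a + d = 0" using a by simp
    show False
    proof (cases "b = 0")
      case True
      have "-2 * v * a * (1 + a^2) = 0" using c3 True by algebra
      then have "1 + a^2 = 0" using a v by simp
      then show False using A d v a by algebra
    next
      case b: False
      have "b^2 * (d * b^2 - 2 * v * b + d) = 0" using c0 by algebra
      then have B: "d * b^2 - 2 * v * b + d = 0" using b by simp
      show False using A B c1 c2 c3 a b d v by algebra
    qed
  qed
qed

lemma Vaffine_no_root:
  fixes r :: "complex poly" and v d :: complex
  assumes d: "d \<noteq> 0" and v: "v \<noteq> 0"
  shows "poly (Vaffine v d) r \<noteq> 0"
proof (cases "degree r \<le> 1")
  case True
  then show ?thesis using Vaffine_no_linear_root[OF d v] degree_le_1_eq by metis
next
  case False
  define m where "m = degree r"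
  have m: "m \<ge> 2" "r \<noteq> 0" using False m_def by auto
  define Q where "Q = [:0, 0, d:] + r * [:0, 2 * v, -2 * v:] + r^2 * [:d, 0, d:] + r^3 * [:-2 * v, 2 * v:]"
  have "poly (Vaffine v d) r = smult d (r^4) + Q"
    unfolding Q_def Vaffine_def by (simp add: algebra_simps power2_eq_square power3_eq_cube power4_eq_xxxx)
  moreover have "degree Q < 4 * m"
    unfolding Q_def
  proof (intro degree_add_less)
    show "degree (r * [:0, 2 * v, -2 * v:]) < 4 * m"
      using degree_mult_le[of r "[:0, 2 * v, -2 * v:]"] degree_pCons3_le[of 0 "2 * v" "-2 * v"] m m_def
      by linarith
    show "degree (r^2 * [:d, 0, d:]) < 4 * m"
      using degree_mult_le[of "r^2" "[:d, 0, d:]"] degree_pCons3_le[of d 0 d] degree_power_le[of r 2] m m_def by linarith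
    show "degree (r^3 * [:-2 * v, 2 * v:]) < 4 * m"
      using degree_mult_le[of "r^3" "[:-2 * v, 2 * v:]"] degree_pCons2_le[of "-2 * v" "2 * v"] degree_power_le[of r 3] m m_def by linarith
  qed (use m in simp)
  moreover have "degree (smult d (r^4)) = 4 * m" using d m m_def by (simp add: degree_power_eq)
  ultimately have "degree (poly (Vaffine v d) r) = 4 * m" by (simp add: degree_add_eq_left)
  then show ?thesis using m by auto
qed

lemma Vaffine_no_linear_factor:
  fixes g :: "complex poly poly"
  assumes d: "d \<noteq> 0" and v: "v \<noteq> 0"
    and g: "degree g = 1" "lead_coeff g = [:a:]" "a \<noteq> 0"
  shows "\<not> g dvd Vaffine v d"
proof
  assume "g dvd Vaffine v d"
  then obtain h where gh: "Vaffine v d = g * h" by (elim dvdE)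
  have g_eq: "g = [:coeff g 0, [:a:]:]" using degree_le_1_eq[of g] g by simp
  define r where "r = smult (-1/a) (coeff g 0)"
  have "poly g r = 0" unfolding r_def using g(3) by (subst g_eq) (simp add: mult.commute)
  then have "poly (Vaffine v d) r = 0" unfolding gh by simp
  then show False using Vaffine_no_root[OF d v] by blast
qed

lemma quadratic_factor_system_unsolvable:
  fixes p0 p1 p2 q0 q1 q2 a b v d :: complex
  assumes d: "d \<noteq> 0" and v: "v \<noteq> 0"
    and e0: "[:p0, p1, p2:] * [:q0, q1, q2:] = [:0, 0, d:]"
    and e1: "[:p0, p1, p2:] * [:-2 * v - d * b, 2 * v - d * a:] + [:b, a:] * [:q0, q1, q2:] = [:0, 2 * v, -2 * v:]"
    and e2: "smult d [:p0, p1, p2:] + [:b, a:] * [:-2 * v - d * b, 2 * v - d * a:] + [:q0, q1, q2:] = [:d, 0, d:]"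
  shows False
proof -
  from e0 have a0: "p0 * q0 = 0" "p0 * q1 + p1 * q0 = 0" "p0 * q2 + p1 * q1 + p2 * q0 = d"
      "p1 * q2 + p2 * q1 = 0" "p2 * q2 = 0"
    by (simp_all add: algebra_simps)
  from e1 have a1: "p0 * (-2 * v - d * b) + b * q0 = 0"
      "p0 * (2 * v - d * a) + p1 * (-2 * v - d * b) + b * q1 + a * q0 = 2 * v"
      "p1 * (2 * v - d * a) + p2 * (-2 * v - d * b) + b * q2 + a * q1 = -2 * v"
      "p2 * (2 * v - d * a) + a * q2 = 0"
    by (simp_all add: algebra_simps)
  from e2 have a2: "d * p0 + b * (-2 * v - d * b) + q0 = d"
      "d * p1 + b * (2 * v - d * a) + a * (-2 * v - d * b) + q1 = 0"
      "d * p2 + a * (2 * v - d * a) + q2 = d"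
    by (simp_all add: algebra_simps)
  have "p0 = 0 \<or> q0 = 0" "p2 = 0 \<or> q2 = 0" using a0 by simp_all
  then consider
      "p0 = 0" "p2 = 0" "q0 = 0" "q2 = 0" "p1 * q1 = d"
    | "p0 = 0" "p1 = 0" "q1 = 0" "q2 = 0" "p2 * q0 = d"
    | "p1 = 0" "p2 = 0" "q0 = 0" "q1 = 0" "p0 * q2 = d"
    using a0 d by (elim disjE) (auto simp: mult_eq_0_iff)
  then show False
    by cases (use a1 a2 d v in algebra)+
qed

lemma Vaffine_no_monic_quadratic_factorization:
  fixes g0 g1 h0 h1 :: "complex poly" and v d :: complex
  assumes d: "d \<noteq> 0" and v: "v \<noteq> 0"
  shows "[:g0, g1, 1:] * [:h0, h1, [:d:]:] \<noteq> Vaffine v d"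
proof
  assume "[:g0, g1, 1:] * [:h0, h1, [:d:]:] = Vaffine v d"
  then have e0: "g0 * h0 = [:0, 0, d:]"
    and e1: "g0 * h1 + g1 * h0 = [:0, 2 * v, -2 * v:]"
    and e2: "smult d g0 + g1 * h1 + h0 = [:d, 0, d:]"
    and e3: "smult d g1 + h1 = [:-2 * v, 2 * v:]"
    unfolding Vaffine_def by (simp_all add: algebra_simps)
  have h1: "h1 = [:-2 * v, 2 * v:] - smult d g1" using e3 by (simp add: algebra_simps)
  have "g0 \<noteq> 0" "h0 \<noteq> 0" using e0 d by auto
  then have deg0: "degree g0 + degree h0 = 2" using e0 d degree_mult_eq[of g0 h0] by simp
  have "degree g1 \<le> 1"
  proof (rule ccontr)
    assume "\<not> degree g1 \<le> 1"
    then have m: "degree g1 \<ge> 2" "g1 \<noteq> 0" by auto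
    have "degree (g1 * [:-2 * v, 2 * v:]) < degree (smult d (g1 * g1))"
      using degree_mult_le[of g1 "[:-2 * v, 2 * v:]"] degree_pCons2_le[of "-2 * v" "2 * v"] m
        degree_mult_eq[of g1 g1] d by simp
    moreover have "g1 * h1 = g1 * [:-2 * v, 2 * v:] + - smult d (g1 * g1)"
      unfolding h1 by (simp add: algebra_simps)
    ultimately have "degree (g1 * h1) = 2 * degree g1"
      using degree_add_eq_right[of "g1 * [:-2 * v, 2 * v:]" "- smult d (g1 * g1)"]
        degree_mult_eq[of g1 g1] m d by simp
    moreover have "degree (g1 * h1) \<le> 2"
    proof -
      have "g1 * h1 = [:d, 0, d:] - smult d g0 - h0" using e2 by (simp add: algebra_simps)
      moreover have "degree ([:d, 0, d:] - smult d g0) \<le> 2"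
        using degree_pCons3_le[of d 0 d] deg0 degree_smult_le[of d g0] by (intro degree_diff_le) auto
      ultimately show ?thesis using deg0 by (metis degree_diff_le le_add2 le_add_same_cancel2)
    qed
    ultimately show False using m by simp
  qed
  then have g1: "g1 = [:coeff g1 0, coeff g1 1:]" by (rule degree_le_1_eq)
  have g0: "g0 = [:coeff g0 0, coeff g0 1, coeff g0 2:]" using deg0 by (intro degree_le_2_eq) simp
  have h0: "h0 = [:coeff h0 0, coeff h0 1, coeff h0 2:]" using deg0 by (intro degree_le_2_eq) simp
  have h1': "h1 = [:-2 * v - d * coeff g1 0, 2 * v - d * coeff g1 1:]"
    unfolding h1 by (subst g1) simp
  show False
    by (rule quadratic_factor_system_unsolvable[OF d v,
          of "coeff g0 0" "coeff g0 1" "coeff g0 2" "coeff h0 0" "coeff h0 1" "coeff h0 2"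
             "coeff g1 0" "coeff g1 1"])
      (use e0 e1 e2 in \<open>simp_all only: h1' g0[symmetric] h0[symmetric] g1[symmetric]\<close>)
qed

lemma Vaffine_no_quadratic_factorization:
  fixes g h :: "complex poly poly"
  assumes d: "d \<noteq> 0" and v: "v \<noteq> 0"
    and g: "degree g = 2" "lead_coeff g = [:a:]" "a \<noteq> 0"
    and h: "degree h = 2" "lead_coeff h = [:b:]"
  shows "g * h \<noteq> Vaffine v d"
proof
  assume gh: "g * h = Vaffine v d"
  obtain g0 g1 where g_eq: "g = [:g0, g1, [:a:]:]" using degree_le_2_eq[of g] g by auto
  obtain h0 h1 where h_eq: "h = [:h0, h1, [:b:]:]" using degree_le_2_eq[of h] h by auto
  have "[:a * b:] = [:d:]"
    using arg_cong[OF gh, of lead_coeff] g h d by (simp add: lead_coeff_mult Vaffine_def mult.commute)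
  then have b: "b = d / a" using g(3) by (simp add: field_simps)
  have "g * h = [:smult (1/a) g0, smult (1/a) g1, 1:] * [:smult a h0, smult a h1, [:d:]:]"
    unfolding g_eq h_eq b using g(3) by (simp add: algebra_simps smult_add_right)
  then show False using gh Vaffine_no_monic_quadratic_factorization[OF d v] by metis
qed

lemma is_unit_poly_poly_poly_const:
  fixes G :: "'a::field poly poly poly"
  assumes "degree G = 0" "lead_coeff G = [:[:a:]:]" "a \<noteq> 0"
  shows "is_unit G"
proof -
  have "G = [:[:[:a:]:]:]" using assms(1,2) by (metis degree_0_id)
  then show ?thesis using assms(3) by (simp add: is_unit_const_poly_iff dvd_field_iff)
qed

lemma irreducible_Vpoly:
  fixes v d :: complex
  assumes d: "d \<noteq> 0" and v: "v \<noteq> 0"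
  shows "irreducible (Vpoly v d)"
proof (rule irreducibleI)
  have deg: "degree (Vpoly v d) = 4" and lc: "lead_coeff (Vpoly v d) = [:[:d:]:]"
    using d by (simp_all add: Vpoly_coeffs)
  then show "Vpoly v d \<noteq> 0" "\<not> is_unit (Vpoly v d)" by (auto simp: is_unit_poly_iff)
  fix G H assume GH: "Vpoly v d = G * H"
  then have "G \<noteq> 0" "H \<noteq> 0" using deg by auto
  then have dsum: "degree G + degree H = 4" using degree_mult_eq[of G H] GH deg by simp
  have "lead_coeff G * lead_coeff H = [:[:d:]:]" using GH lc by (simp add: lead_coeff_mult)
  then obtain a b where a: "a \<noteq> 0" "lead_coeff G = [:[:a:]:]" and b: "b \<noteq> 0" "lead_coeff H = [:[:b:]:]"
    using poly_poly_mult_eq_const_imp_const[OF _ d] by (metis mult.commute)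
  note G' = dehomogenize_degree_lead_coeff[OF a(2) a(1)]
  note H' = dehomogenize_degree_lead_coeff[OF b(2) b(1)]
  have fgh: "dehomogenize G * dehomogenize H = Vaffine v d"
    using GH dehomogenize_Vpoly dehomogenize_mult by metis
  consider "degree G = 0" | "degree H = 0" | "degree G = 1" | "degree H = 1" | "degree G = 2" "degree H = 2"
    using dsum by linarith
  then show "is_unit G \<or> is_unit H"
  proof cases
    case 1
    then show ?thesis using is_unit_poly_poly_poly_const a by blast
  next
    case 2
    then show ?thesis using is_unit_poly_poly_poly_const b by blast
  next
    case 3
    then show ?thesis using Vaffine_no_linear_factor[OF d v _ G'(2) a(1)] G'(1) fgh by (metis dvd_triv_left)
  next
    case 4
    then show ?thesis using Vaffine_no_linear_factor[OF d v _ H'(2) b(1)] H'(1) fgh by (metis dvd_triv_right)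
  next
    case 5
    then show ?thesis using Vaffine_no_quadratic_factorization[OF d v _ G'(2) a(1) _ H'(2)] G'(1) H'(1) fgh
      by simp
  qed
qed

theorem lemma7p2:
  fixes v d :: complex
  assumes "d \<noteq> 0" and "v \<noteq> 0"
  shows
   "(d \<noteq> 2 * v \<and> d \<noteq> -2 * v \<longrightarrow>
       (\<forall>p. singular_pt (Vpoly v d) p \<longleftrightarrow> proj_eq p (pt3 1 0 0) \<or> proj_eq p (pt3 0 1 0)) \<and>
       irreducible (Vpoly v d) \<and>
       (d^2 \<noteq> v^2 \<longrightarrow> is_node (Vpoly v d) (pt3 1 0 0) \<and> is_node (Vpoly v d) (pt3 0 1 0)) \<and>
       (d^2 = v^2 \<longrightarrow> is_ordinary_cusp (Vpoly v d) (pt3 1 0 0) \<and>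
                      is_ordinary_cusp (Vpoly v d) (pt3 0 1 0))) \<and>
    (d = 2 * v \<longrightarrow>
       irreducible (Vpoly v d) \<and>
       (\<forall>p. singular_pt (Vpoly v d) p \<longleftrightarrow>
              proj_eq p (pt3 1 0 0) \<or> proj_eq p (pt3 0 1 0) \<or> proj_eq p (pt3 1 (-1) 1)) \<and>
       is_node (Vpoly v d) (pt3 1 (-1) 1)) \<and>
    (d = -2 * v \<longrightarrow>
       irreducible (Vpoly v d) \<and>
       (\<forall>p. singular_pt (Vpoly v d) p \<longleftrightarrow>
              proj_eq p (pt3 1 0 0) \<or> proj_eq p (pt3 0 1 0) \<or> proj_eq p (pt3 (-1) 1 1)) \<and>
       is_node (Vpoly v d) (pt3 (-1) 1 1))"
proof -
  have "d \<noteq> 2 * v \<or> d \<noteq> -2 * v" using assms by auto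
  then show ?thesis
    using singular_pt_Vpoly_iff[OF assms] irreducible_Vpoly[OF assms]
      is_node_Vpoly_coordinate_points[OF assms] is_ordinary_cusp_Vpoly_coordinate_points[OF assms]
      is_node_Vpoly_extra_points[OF assms(2)]
    by auto
qed

end
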